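(* Let $1\leq p <\infty$ and $f\in L^{p}(\mu)$. Then the set $\mathcal{O}_{f}:=\left\{\mathfrak{a}\in I : \int_{\mathcal{C}_{\mathfrak{a}}}|f|^{p} \ d\mu\neq 0 \right\}$ is countable and $$\sum_{\mathfrak{a}\in\mathcal{O}_{f}}\int_{\mathcal{C}_{\mathfrak{a}}}|f|^{p} \ d\mu =\int_{\mathcal{F}_{f}}|f|^{p} \ d\mu \leq \int_{\mathbb{R}^{\mathbb{N}}} |f|^{p} \ d\mu,$$ where $\mathcal{F}_{f}:= \bigsqcup_{\mathfrak{a}\in \mathcal{O}_{f}}\mathcal{C}_{\mathfrak{a}}$.
   Context: Let $\mathcal{B}$ be the Borel $\sigma$-algebra of $\mathbb{R}$, $\lambda$ the Lebesgue measure, and $\mathcal{B}_{\infty}$ the $\sigma$-algebra on $\mathbb{R}^{\mathbb{N}}$ generated by the cylinder sets $\prod_{i=1}^{m}C_{i}\times\prod_{i=m+1}^{\infty}\mathbb{R}$ with $C_i\in\mathcal{B}$, $m\in\mathbb{N}$. Let $\mathcal{F}(\mathcal{B},\lambda)$ be the set of finite rectangles $\prod_{i\in\mathbb{N}}C_{i}$ with $C_i\in\mathcal{B}$ and $\prod_{i}\lambda(C_i)\in[0,\infty)$, with $\mathrm{vol}(\prod_{i}C_i):=\prod_i\lambda(C_i)$. The measure $\mu$ is the restriction to $\mathcal{B}_{\infty}$ of the outer measure $\mu^{\ast}(A):=\inf\{\sum_{n}\mathrm{vol}(\mathscr{C}_{n}) : \mathscr{C}_{n}\in\mathcal{F}(\mathcal{B},\lambda),\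 A\subset\bigcup_{n}\mathscr{C}_{n}\}$ ($\inf\varnothing=\infty$). Let $I:=\mathbb{Z}^{\mathbb{N}}$ and, for $\mathfrak{a}=(a_n)_{n\in\mathbb{N}}\in I$, let $\mathcal{C}_{\mathfrak{a}}:=\prod_{n\in\mathbb{N}}[a_{n},a_{n}+1)$ (these unit cubes are pairwise disjoint, cover $\mathbb{R}^{\mathbb{N}}$, and have $\mu$-measure $1$). *)

theory Defs
  imports "HOL-Analysis.Analysis"
begin

type_synonym seqR = "nat \<Rightarrow> real"

definition B_inf :: "seqR set set" where
  "B_inf = sets (PiM UNIV (\<lambda>_. borel))"

definition rect :: "(nat \<Rightarrow> real set) \<Rightarrow> seqR set" where
  "rect C = {x. \<forall>i. x i \<in> C i}"

definition vol_conv :: "(nat \<Rightarrow> real set) \<Rightarrow> ennreal \<Rightarrow> bool" where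
  "vol_conv C v \<longleftrightarrow> (\<lambda>n. \<Prod>i<n. emeasure lborel (C i)) \<longlonglongrightarrow> v"

definition vol :: "(nat \<Rightarrow> real set) \<Rightarrow> ennreal" where
  "vol C = lim (\<lambda>n. \<Prod>i<n. emeasure lborel (C i))"

definition finite_rect :: "(nat \<Rightarrow> real set) \<Rightarrow> bool" where
  "finite_rect C \<longleftrightarrow> (\<forall>i. C i \<in> sets borel) \<and> (\<exists>v. vol_conv C v \<and> v < \<infinity>)"

definition mu_outer :: "seqR set \<Rightarrow> ennreal" where
  "mu_outer A = Inf {(\<Sum>n. vol (R n)) | R. (\<forall>n. finite_rect (R n)) \<and> A \<subseteq> (\<Union>n. rect (R n))}"

definition mu :: "seqR measure" where
  "mu = measure_of UNIV B_inf mu_outer"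

definition cube :: "(nat \<Rightarrow> int) \<Rightarrow> seqR set" where
  "cube a = {x. \<forall>n. of_int (a n) \<le> x n \<and> x n < of_int (a n) + 1}"

definition Lp :: "real \<Rightarrow> seqR measure \<Rightarrow> (seqR \<Rightarrow> real) set" where
  "Lp p M = {f. f \<in> borel_measurable M \<and> integrable M (\<lambda>x. \<bar>f x\<bar> powr p)}"

end

theory Submission
  imports Defs
begin

text \<open>The unit cubes are pairwise disjoint and measurable, so every finite partial sum of the
  integrals of |f|^p over cubes is the integral over a finite union of cubes and hence at most
  the integral of |f|^p over the whole space. A nonnegative family with bounded finite sums has
  countable support, and over a countable index set countable additivity of the set integral
  gives the sum.\<close>

lemma set_integrable_if_integrable:
  fixes g :: "'a \<Rightarrow> 'b::{banach, second_countable_topology}"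
  assumes "integrable M g" and "A \<in> sets M"
  shows "set_integrable M A g"
  unfolding set_integrable_def using integrable_mult_indicator[OF assms(2,1)] .

lemma set_integral_nonneg:
  fixes g :: "'a \<Rightarrow> real"
  assumes "\<And>x. 0 \<le> g x"
  shows "0 \<le> (LINT x:A|M. g x)"
  unfolding set_lebesgue_integral_def
  using assms by (intro integral_nonneg_AE) (auto simp: indicator_def)

lemma set_integral_le_integral:
  fixes g :: "'a \<Rightarrow> real"
  assumes "integrable M g" and "\<And>x. 0 \<le> g x" and "A \<in> sets M"
  shows "(LINT x:A|M. g x) \<le> (LINT x|M. g x)"
  unfolding set_lebesgue_integral_def
  using assms set_integrable_if_integrable[OF assms(1,3)]
  by (intro integral_mono) (auto simp: set_integrable_def indicator_def)

lemma summable_on_set_integral_disjoint_family: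
  fixes g :: "'a \<Rightarrow> real"
  assumes int: "integrable M g" and nonneg: "\<And>x. 0 \<le> g x"
    and sets: "\<And>i. C i \<in> sets M" and disj: "disjoint_family C"
  shows "(\<lambda>i. LINT x:C i|M. g x) summable_on UNIV"
proof (rule nonneg_bdd_above_summable_on)
  have "(\<Sum>i\<in>E. LINT x:C i|M. g x) \<le> (LINT x|M. g x)" if "finite E" for E
  proof -
    have "(\<Sum>i\<in>E. LINT x:C i|M. g x) = (LINT x:(\<Union>i\<in>E. C i)|M. g x)"
      using that disjoint_family_on_mono[OF subset_UNIV disj]
      by (intro set_integral_finite_Union[symmetric] set_integrable_if_integrable int sets)
    also have "\<dots> \<le> (LINT x|M. g x)"
      using that sets by (intro set_integral_le_integral int nonneg) auto
    finally show ?thesis .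
  qed
  then show "bdd_above (sum (\<lambda>i. LINT x:C i|M. g x) ` {E. E \<subseteq> UNIV \<and> finite E})"
    by (auto simp: bdd_above_def)
qed (rule set_integral_nonneg[OF nonneg])

lemma has_sum_set_integral_disjoint_UN:
  fixes g :: "'a \<Rightarrow> real"
  assumes int: "integrable M g" and nonneg: "\<And>x. 0 \<le> g x"
    and sets: "\<And>i. C i \<in> sets M" and disj: "disjoint_family C" and "countable S"
  shows "((\<lambda>i. LINT x:C i|M. g x) has_sum (LINT x:(\<Union>i\<in>S. C i)|M. g x)) S"
proof (cases "finite S")
  case True
  then show ?thesis
    using disjoint_family_on_mono[OF subset_UNIV disj]
    by (intro has_sum_finiteI set_integral_finite_Union set_integrable_if_integrable int sets)
next
  case False
  define e where "e = from_nat_into S"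
  have bij: "bij_betw e UNIV S"
    unfolding e_def using bij_betw_from_nat_into[OF \<open>countable S\<close> False] .
  have "(\<Union>n. C (e n)) = (\<Union>i\<in>S. C i)"
    using bij_betw_imp_surj_on[OF bij] by auto
  moreover have "(\<lambda>n. LINT x:C (e n)|M. g x) sums (LINT x:(\<Union>n. C (e n))|M. g x)"
  proof -
    have "(\<lambda>i. LINT x:C i|M. g x) summable_on S"
      by (rule summable_on_subset_banach[OF
            summable_on_set_integral_disjoint_family[OF int nonneg sets disj] subset_UNIV])
    then have "summable (\<lambda>n. LINT x:C (e n)|M. g x)"
      by (intro summable_on_imp_summable summable_on_reindex_bij_betw[OF bij, THEN iffD2])
    moreover have "C (e m) \<inter> C (e n) = {}" if "m \<noteq> n" for m n
      using disj bij_betw_imp_inj_on[OF bij] that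
      by (auto simp: disjoint_family_on_def inj_on_def)
    ultimately show ?thesis
      using sets int
      by (subst lebesgue_integral_countable_add)
        (auto intro!: set_integrable_if_integrable summable_sums)
  qed
  ultimately have "((\<lambda>n. LINT x:C (e n)|M. g x) has_sum (LINT x:(\<Union>i\<in>S. C i)|M. g x)) UNIV"
    by (auto intro: sums_nonneg_imp_has_sum set_integral_nonneg nonneg)
  then show ?thesis
    by (rule has_sum_reindex_bij_betw[OF bij, THEN iffD1])
qed

lemma sets_mu: "sets mu = B_inf"
proof -
  have "sigma_algebra UNIV B_inf"
    using sets.sigma_algebra_axioms[of "PiM UNIV (\<lambda>_::nat. borel :: real measure)"]
    by (simp add: B_inf_def space_PiM)
  then show ?thesis
    unfolding mu_def by (rule sigma_algebra.sets_measure_of_eq)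
qed

lemma cube_in_sets_mu: "cube a \<in> sets mu"
proof -
  have "cube a = PiE UNIV (\<lambda>n. {real_of_int (a n) ..< real_of_int (a n) + 1})"
    unfolding cube_def by (auto simp: PiE_def Pi_def)
  also have "\<dots> \<in> sets (PiM UNIV (\<lambda>_::nat. borel :: real measure))"
    by (rule sets_PiM_I_countable) auto
  finally show ?thesis
    unfolding sets_mu B_inf_def .
qed

lemma cube_eq_floor: "cube a = {x. \<forall>n. \<lfloor>x n\<rfloor> = a n}"
  by (auto simp: cube_def floor_eq_iff)

lemma disjoint_family_cube: "disjoint_family cube"
  unfolding disjoint_family_on_def cube_eq_floor by auto

theorem theorem3p1:
  fixes p :: real and f :: "seqR \<Rightarrow> real"
  assumes "1 \<le> p" and "f \<in> Lp p mu"
  defines "O_f \<equiv> {a :: nat \<Rightarrow> int. (LINT x:cube a|mu. \<bar>f x\<bar> powr p) \<noteq> 0}"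
  defines "F_f \<equiv> (\<Union>a\<in>O_f. cube a)"
  shows "countable O_f
    \<and> ((\<lambda>a. LINT x:cube a|mu. \<bar>f x\<bar> powr p) has_sum (LINT x:F_f|mu. \<bar>f x\<bar> powr p)) O_f
    \<and> (LINT x:F_f|mu. \<bar>f x\<bar> powr p) \<le> (LINT x|mu. \<bar>f x\<bar> powr p)"
proof -
  have int: "integrable mu (\<lambda>x. \<bar>f x\<bar> powr p)"
    using assms(2) unfolding Lp_def by simp
  have nonneg: "0 \<le> \<bar>f x\<bar> powr p" for x
    by simp
  have "countable O_f"
    using summable_countable_real[OF summable_on_set_integral_disjoint_family
        [OF int nonneg cube_in_sets_mu disjoint_family_cube]]
    unfolding O_f_def by simp
  moreover have "((\<lambda>a. LINT x:cube a|mu. \<bar>f x\<bar> powr p) has_sum (LINT x:F_f|mu. \<bar>f x\<bar> powr p)) O_f"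
    unfolding F_f_def using \<open>countable O_f\<close>
    by (rule has_sum_set_integral_disjoint_UN[OF int nonneg cube_in_sets_mu disjoint_family_cube])
  moreover have "F_f \<in> sets mu"
    unfolding F_f_def using \<open>countable O_f\<close> cube_in_sets_mu by (intro sets.countable_UN') auto
  then have "(LINT x:F_f|mu. \<bar>f x\<bar> powr p) \<le> (LINT x|mu. \<bar>f x\<bar> powr p)"
    by (rule set_integral_le_integral[OF int nonneg])
  ultimately show ?thesis
    by blast
qed

end
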